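(* Let $(G,\precsim)$ be a compatible quasi-ordered abelian group such that $G^o$ is a direct summand of $G$ with complement $F$. Then $(F,\precsim|_F)$ is canonically isomorphic (via $f\mapsto f+G^o$) to the valued part $(G/G^o,\precsim)$ of $(G,\precsim)$, and the map $G^o\times F\to G$, $(a,f)\mapsto a+f$, is an isomorphism of quasi-ordered groups from $(G^o,\precsim|_{G^o})\boxtimes(F,\precsim|_F)$ onto $(G,\precsim)$.
   Context: A compatible quasi-ordered abelian group is an abelian group $G$ with a total quasi-order $\precsim$ (reflexive, transitive, any two elements comparable) such that, writing $a\sim b$ for $a\precsim b\wedge b\precsim a$: $(Q_1)$ $x\sim0\Rightarrow x=0$; $(Q_2)$ $x\precsim y\wedge y\not\sim z\Rightarrow x+z\precsim y+z$, for all $x,y,z$. With $cl(g)$ the $\sim$-class of $g$, $g$ is o-type if $cl(g)=\{g\}$ and $g$ is not of order $2$; $G^o$, the set of o-type elements, is a subgroup on which $\precsim$ is a group order. The valued part of $G$ is $G/G^o$ with the (valuational) quasi-order $g+G^o\precsim h+G^o\Leftrightarrow g-h\in G^o\vee(g-h\notin G^o\wedge g\precsim h)$. For an ordered abelian group $(A,\le)$ and an abelian group $F$ with a valuational quasi-order $\precsim_F$ (one of the form $a\precsim_F b\Leftrightarrow w(b)\le w(a)$ for a valuation $w$), the compatible product $(A,\le)\boxtimes(F,\precsim_F)$ is the group $A\times F$ with the quasi-order $(a,f)\precsim(a',f')\Leftrightarrow(f=f'=0\wedge a\le a')\vee(f'\neq0\wedge f\precsim_F f')$. An isomorphism of quasi-ordered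 groups is a group isomorphism $\phi$ with $x\precsim y\Leftrightarrow\phi(x)\precsim\phi(y)$. *)

theory Defs
  imports "HOL-Algebra.Algebra"
begin

text \<open>Abelian groups are written multiplicatively (HOL-Algebra convention):
  the group operation is \<open>\<otimes>\<close>, the neutral element \<open>\<one>\<close>.\<close>

definition qequiv :: "('a \<Rightarrow> 'a \<Rightarrow> bool) \<Rightarrow> 'a \<Rightarrow> 'a \<Rightarrow> bool" where
  "qequiv qo x y \<longleftrightarrow> qo x y \<and> qo y x"

text \<open>Compatible quasi-ordered abelian group: total quasi-order plus (Q1), (Q2).\<close>
definition cqo_group :: "('a, 'b) monoid_scheme \<Rightarrow> ('a \<Rightarrow> 'a \<Rightarrow> bool) \<Rightarrow> bool" where
  "cqo_group G qo \<longleftrightarrow> comm_group G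
     \<and> (\<forall>x\<in>carrier G. qo x x)
     \<and> (\<forall>x\<in>carrier G. \<forall>y\<in>carrier G. \<forall>z\<in>carrier G. qo x y \<and> qo y z \<longrightarrow> qo x z)
     \<and> (\<forall>x\<in>carrier G. \<forall>y\<in>carrier G. qo x y \<or> qo y x)
     \<and> (\<forall>x\<in>carrier G. qequiv qo x \<one>\<^bsub>G\<^esub> \<longrightarrow> x = \<one>\<^bsub>G\<^esub>)
     \<and> (\<forall>x\<in>carrier G. \<forall>y\<in>carrier G. \<forall>z\<in>carrier G.
          qo x y \<and> \<not> qequiv qo y z \<longrightarrow> qo (x \<otimes>\<^bsub>G\<^esub> z) (y \<otimes>\<^bsub>G\<^esub> z))"

definition qclass :: "('a, 'b) monoid_scheme \<Rightarrow> ('a \<Rightarrow> 'a \<Rightarrow> bool) \<Rightarrow> 'a \<Rightarrow> 'a set" where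
  "qclass G qo g = {h \<in> carrier G. qequiv qo h g}"

definition otype_part :: "('a, 'b) monoid_scheme \<Rightarrow> ('a \<Rightarrow> 'a \<Rightarrow> bool) \<Rightarrow> 'a set" where
  "otype_part G qo = {g \<in> carrier G. qclass G qo g = {g}
      \<and> \<not> (g \<noteq> \<one>\<^bsub>G\<^esub> \<and> g \<otimes>\<^bsub>G\<^esub> g = \<one>\<^bsub>G\<^esub>)}"

definition valued_le :: "('a, 'b) monoid_scheme \<Rightarrow> ('a \<Rightarrow> 'a \<Rightarrow> bool) \<Rightarrow> 'a set \<Rightarrow> 'a set \<Rightarrow> bool" where
  "valued_le G qo C D \<longleftrightarrow> (\<exists>g\<in>carrier G. \<exists>h\<in>carrier G.
      C = otype_part G qo #>\<^bsub>G\<^esub> g \<and> D = otype_part G qo #>\<^bsub>G\<^esub> h \<and>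
      (g \<otimes>\<^bsub>G\<^esub> inv\<^bsub>G\<^esub> h \<in> otype_part G qo \<or>
       (g \<otimes>\<^bsub>G\<^esub> inv\<^bsub>G\<^esub> h \<notin> otype_part G qo \<and> qo g h)))"

definition direct_summand_compl :: "('a, 'b) monoid_scheme \<Rightarrow> 'a set \<Rightarrow> 'a set \<Rightarrow> bool" where
  "direct_summand_compl G H F \<longleftrightarrow> subgroup H G \<and> subgroup F G \<and>
      H \<inter> F = {\<one>\<^bsub>G\<^esub>} \<and> H <#>\<^bsub>G\<^esub> F = carrier G"

definition compat_prod_le :: "('c, 'd) monoid_scheme \<Rightarrow> ('a \<Rightarrow> 'a \<Rightarrow> bool) \<Rightarrow> ('c \<Rightarrow> 'c \<Rightarrow> bool)
    \<Rightarrow> ('a \<times> 'c) \<Rightarrow> ('a \<times> 'c) \<Rightarrow> bool" where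
  "compat_prod_le F qoA qoF p q \<longleftrightarrow>
     (snd p = \<one>\<^bsub>F\<^esub> \<and> snd q = \<one>\<^bsub>F\<^esub> \<and> qoA (fst p) (fst q)) \<or>
     (snd q \<noteq> \<one>\<^bsub>F\<^esub> \<and> qoF (snd p) (snd q))"

definition qo_iso :: "('a, 'b) monoid_scheme \<Rightarrow> ('a \<Rightarrow> 'a \<Rightarrow> bool) \<Rightarrow> ('c, 'd) monoid_scheme
    \<Rightarrow> ('c \<Rightarrow> 'c \<Rightarrow> bool) \<Rightarrow> ('a \<Rightarrow> 'c) \<Rightarrow> bool" where
  "qo_iso G qoG H qoH \<phi> \<longleftrightarrow> \<phi> \<in> iso G H \<and>
     (\<forall>x\<in>carrier G. \<forall>y\<in>carrier G. qoG x y \<longleftrightarrow> qoH (\<phi> x) (\<phi> y))"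

end

theory Submission
  imports Defs
begin

text \<open>Let \<open>v \<notin> G\<^sup>o\<close>. Either the \<open>\<sim>\<close>-class of \<open>v\<close> contains some \<open>u \<noteq> v\<close>, and then (Q1) and (Q2)
  applied to \<open>u - v\<close> force \<open>-v \<sim> v\<close>, or \<open>v\<close> has order 2; in both cases \<open>-v \<sim> v\<close>. From this one
  derives that \<open>v\<close> lies strictly above every o-type element and that \<open>a + v \<sim> v\<close> for \<open>a \<in> G\<^sup>o\<close>.
  Hence on \<open>G = G\<^sup>o \<oplus> F\<close> the position of \<open>a + f\<close> is governed by \<open>f\<close> when \<open>f \<noteq> 0\<close> and by \<open>a\<close>
  when \<open>f = 0\<close>, which is the compatible product order, and the valued quasi-order of
  \<open>G/G\<^sup>o\<close> is the quasi-order of its representatives in \<open>F\<close>.\<close>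

lemma (in group) rcos_eq_iff_mult_inv:
  assumes "subgroup H G" "x \<in> carrier G" "y \<in> carrier G"
  shows "H #> x = H #> y \<longleftrightarrow> x \<otimes> inv y \<in> H"
  using assms repr_independence repr_independenceD subgroup.rcos_module[OF assms(1) is_group]
  by metis

lemma subgroup_generated_subgroup_eq:
  assumes "subgroup H G"
  shows "subgroup_generated G H = G\<lparr>carrier := H\<rparr>"
  using subgroup.carrier_subgroup_generated_subgroup[OF assms]
  by (simp add: subgroup_generated_def)

locale compatible_qo_group =
  fixes G :: "('a, 'b) monoid_scheme" (structure) and qo :: "'a \<Rightarrow> 'a \<Rightarrow> bool"
  assumes cqo_group: "cqo_group G qo"
    and otype_subgroup: "subgroup (otype_part G qo) G"
begin

abbreviation Go :: "'a set" where "Go \<equiv> otype_part G qo"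

sublocale comm_group G
  using cqo_group unfolding cqo_group_def by blast

lemma qo_refl: "x \<in> carrier G \<Longrightarrow> qo x x"
  using cqo_group unfolding cqo_group_def by blast

lemma qo_trans: "\<lbrakk>x \<in> carrier G; y \<in> carrier G; z \<in> carrier G; qo x y; qo y z\<rbrakk> \<Longrightarrow> qo x z"
  using cqo_group unfolding cqo_group_def by blast

lemma qo_total: "\<lbrakk>x \<in> carrier G; y \<in> carrier G\<rbrakk> \<Longrightarrow> qo x y \<or> qo y x"
  using cqo_group unfolding cqo_group_def by blast

lemma qequiv_one_imp_one: "\<lbrakk>x \<in> carrier G; qequiv qo x \<one>\<rbrakk> \<Longrightarrow> x = \<one>"
  using cqo_group unfolding cqo_group_def by blast

lemma qo_mult_right:
  "\<lbrakk>x \<in> carrier G; y \<in> carrier G; z \<in> carrier G; qo x y; \<not> qequiv qo y z\<rbrakk>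
     \<Longrightarrow> qo (x \<otimes> z) (y \<otimes> z)"
  using cqo_group unfolding cqo_group_def by blast

lemma qo_qequiv_cong:
  assumes "x \<in> carrier G" "x' \<in> carrier G" "y \<in> carrier G" "y' \<in> carrier G"
    and "qequiv qo x x'" "qequiv qo y y'"
  shows "qo x y \<longleftrightarrow> qo x' y'"
  using assms qo_trans unfolding qequiv_def by meson

lemma otype_closed: "a \<in> Go \<Longrightarrow> a \<in> carrier G"
  by (rule subgroup.mem_carrier[OF otype_subgroup])

lemma otype_eq_if_qequiv: "\<lbrakk>a \<in> Go; x \<in> carrier G; qequiv qo x a\<rbrakk> \<Longrightarrow> x = a"
  unfolding otype_part_def qclass_def by blast

lemma mult_otype_in_otype_iff:
  assumes "a \<in> Go" "v \<in> carrier G"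
  shows "v \<otimes> a \<in> Go \<longleftrightarrow> v \<in> Go"
proof
  assume "v \<otimes> a \<in> Go"
  then have "v \<otimes> a \<otimes> inv a \<in> Go"
    using assms otype_subgroup by (simp add: subgroup.m_closed subgroup.m_inv_closed)
  then show "v \<in> Go"
    using assms otype_closed by (simp add: m_assoc)
qed (use assms otype_subgroup in \<open>simp add: subgroup.m_closed\<close>)

lemma inv_in_otype_iff: "v \<in> carrier G \<Longrightarrow> inv v \<in> Go \<longleftrightarrow> v \<in> Go"
  using otype_subgroup subgroup.m_inv_closed by fastforce

lemma not_otype_cases:
  assumes "v \<in> carrier G" "v \<notin> Go"
  obtains u where "u \<in> carrier G" "u \<noteq> v" "qequiv qo u v" | "v \<otimes> v = \<one>"
proof -
  have "v \<in> qclass G qo v"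
    using assms qo_refl unfolding qclass_def qequiv_def by blast
  with assms that show thesis
    unfolding otype_part_def qclass_def by blast
qed

lemma inv_qequiv_not_otype:
  assumes v: "v \<in> carrier G" "v \<notin> Go"
  shows "qequiv qo (inv v) v"
proof (cases rule: not_otype_cases[OF v])
  case (1 u)
  have iv: "inv v \<in> carrier G"
    using v by simp
  show ?thesis
  proof (rule ccontr)
    assume not_equiv: "\<not> qequiv qo (inv v) v"
    then have ne_v: "\<not> qequiv qo v (inv v)"
      unfolding qequiv_def by blast
    have ne_u: "\<not> qequiv qo u (inv v)"
    proof
      assume "qequiv qo u (inv v)"
      with 1 have "qequiv qo (inv v) v"
        using qo_trans[OF iv \<open>u \<in> carrier G\<close> v(1)] qo_trans[OF v(1) \<open>u \<in> carrier G\<close> iv]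
        unfolding qequiv_def by blast
      with not_equiv show False ..
    qed
    have "qo u v" "qo v u"
      using 1 unfolding qequiv_def by auto
    then have "qo (u \<otimes> inv v) \<one>" "qo \<one> (u \<otimes> inv v)"
      using qo_mult_right[OF \<open>u \<in> carrier G\<close> v(1) iv _ ne_v]
        qo_mult_right[OF v(1) \<open>u \<in> carrier G\<close> iv _ ne_u] v(1)
      by simp_all
    then have "u \<otimes> inv v = \<one>"
      using qequiv_one_imp_one[of "u \<otimes> inv v"] 1 iv unfolding qequiv_def by simp
    then have "u = v"
      using inv_solve_right'[OF one_closed \<open>u \<in> carrier G\<close> v(1)] v(1) by simp
    with \<open>u \<noteq> v\<close> show False ..
  qed
next
  case 2
  then have "inv v = v"
    using v inv_equality by blast
  then show ?thesis
    using v qo_refl unfolding qequiv_def by simp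
qed

lemma not_otype_not_le_one:
  assumes w: "w \<in> carrier G" "w \<notin> Go"
  shows "\<not> qo w \<one>"
proof
  assume "qo w \<one>"
  have one: "\<one> \<in> Go"
    using otype_subgroup subgroup.one_closed by blast
  have "\<not> qo \<one> w"
    using otype_eq_if_qequiv[OF one w(1)] \<open>qo w \<one>\<close> w one unfolding qequiv_def by blast
  moreover have "\<not> qequiv qo \<one> (inv w)"
    using otype_eq_if_qequiv[OF one, of "inv w"] w inv_in_otype_iff one
    unfolding qequiv_def by auto
  then have "qo \<one> (inv w)"
    using qo_mult_right[of w \<one> "inv w"] \<open>qo w \<one>\<close> w by simp
  then have "qo \<one> w"
    using inv_qequiv_not_otype[OF w] qo_trans[of \<one> "inv w" w] w unfolding qequiv_def by simp
  ultimately show False ..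
qed

lemma otype_inv_closed: "a \<in> Go \<Longrightarrow> inv a \<in> Go"
  by (rule subgroup.m_inv_closed[OF otype_subgroup])

lemma not_otype_not_le_otype:
  assumes a: "a \<in> Go" and v: "v \<in> carrier G" "v \<notin> Go"
  shows "\<not> qo v a"
proof
  assume "qo v a"
  have ac: "a \<in> carrier G"
    using a by (rule otype_closed)
  show False
  proof (cases "a = \<one>")
    case True
    then show False
      using not_otype_not_le_one[OF v] \<open>qo v a\<close> by simp
  next
    case False
    have "inv a \<noteq> a"
    proof
      assume "inv a = a"
      with r_inv[OF ac] have "a \<otimes> a = \<one>"
        by simp
      with a False show False
        unfolding otype_part_def by blast
    qed
    then have "\<not> qequiv qo a (inv a)"
      using otype_eq_if_qequiv[OF a, of "inv a"] ac unfolding qequiv_def by auto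
    then have "qo (v \<otimes> inv a) \<one>"
      using qo_mult_right[of v a "inv a"] \<open>qo v a\<close> v ac by simp
    moreover have "v \<otimes> inv a \<notin> Go"
      using mult_otype_in_otype_iff[OF otype_inv_closed[OF a] v(1)] v(2) by simp
    ultimately show False
      using not_otype_not_le_one v ac by simp
  qed
qed

text \<open>If \<open>v \<otimes> a\<close> were strictly below \<open>v\<close>, (Q2) with \<open>inv a\<close> would give \<open>v \<precsim> v \<otimes> inv a\<close>,
  while \<open>inv w \<sim> w\<close> for \<open>w = v\<close> and \<open>w = v \<otimes> inv a\<close> gives
  \<open>v \<otimes> inv a \<sim> inv v \<otimes> a \<precsim> v \<otimes> a\<close>.\<close>

lemma not_otype_le_mult_otype:
  assumes a: "a \<in> Go" and v: "v \<in> carrier G" "v \<notin> Go"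
  shows "qo v (v \<otimes> a)"
proof (rule ccontr)
  assume not_le: "\<not> qo v (v \<otimes> a)"
  have ac: "a \<in> carrier G" and ia: "inv a \<in> Go"
    using a by (rule otype_closed, rule otype_inv_closed)
  have iv: "inv v \<in> carrier G" "inv v \<notin> Go"
    using v inv_in_otype_iff by auto
  have not_equiv: "\<not> qequiv qo v a" "\<not> qequiv qo (inv v) a" "\<not> qequiv qo v (inv a)"
    using otype_eq_if_qequiv[OF a v(1)] otype_eq_if_qequiv[OF a iv(1)]
      otype_eq_if_qequiv[OF ia v(1)] a ia v(2) iv(2) by blast+
  have "v \<otimes> inv a \<notin> Go"
    using mult_otype_in_otype_iff[OF ia v(1)] v(2) by simp
  then have "qequiv qo (inv (v \<otimes> inv a)) (v \<otimes> inv a)"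
    using inv_qequiv_not_otype v ac by simp
  then have "qequiv qo (inv v \<otimes> a) (v \<otimes> inv a)"
    using v ac by (simp add: inv_mult)
  moreover have "qo (inv v \<otimes> a) (v \<otimes> a)"
    using qo_mult_right[OF iv(1) v(1) ac _ not_equiv(1)] inv_qequiv_not_otype[OF v]
    unfolding qequiv_def by simp
  ultimately have low: "qo (v \<otimes> inv a) (v \<otimes> a)"
    using qo_trans[of "v \<otimes> inv a" "inv v \<otimes> a" "v \<otimes> a"] v ac unfolding qequiv_def by simp
  have "qo (v \<otimes> a) v"
    using qo_total[of v "v \<otimes> a"] not_le v ac by auto
  then have "qo (v \<otimes> a \<otimes> inv a) (v \<otimes> inv a)"
    using qo_mult_right[of "v \<otimes> a" v "inv a"] not_equiv(3) v ac by simp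
  then have "qo v (v \<otimes> inv a)"
    using v ac by (simp add: m_assoc)
  with low have "qo v (v \<otimes> a)"
    using qo_trans[of v "v \<otimes> inv a" "v \<otimes> a"] v ac by simp
  with not_le show False ..
qed

lemma otype_mult_qequiv:
  assumes a: "a \<in> Go" and v: "v \<in> carrier G" "v \<notin> Go"
  shows "qequiv qo (a \<otimes> v) v"
proof -
  have ac: "a \<in> carrier G"
    using a by (rule otype_closed)
  have "v \<otimes> a \<notin> Go"
    using mult_otype_in_otype_iff[OF a v(1)] v(2) by simp
  then have "qo (v \<otimes> a) (v \<otimes> a \<otimes> inv a)"
    using not_otype_le_mult_otype[OF otype_inv_closed[OF a]] v ac by simp
  then have "qo (v \<otimes> a) v"
    using v ac by (simp add: m_assoc)
  then show ?thesis
    using not_otype_le_mult_otype[OF a v] m_comm[OF ac v(1)] unfolding qequiv_def by simp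
qed

lemma rcos_eq_otype_mult:
  assumes "x \<in> carrier G" "g \<in> carrier G" "Go #> g = Go #> x"
  obtains a where "a \<in> Go" "g = a \<otimes> x"
  using assms rcos_self[OF assms(2) otype_subgroup] that unfolding r_coset_def by blast

lemma valued_le_rcos_iff:
  assumes x: "x \<in> carrier G" and y: "y \<in> carrier G"
  shows "valued_le G qo (Go #> x) (Go #> y) \<longleftrightarrow>
           x \<otimes> inv y \<in> Go \<or> (x \<otimes> inv y \<notin> Go \<and> qo x y)"
proof
  assume "valued_le G qo (Go #> x) (Go #> y)"
  then obtain g h where g: "g \<in> carrier G" "Go #> x = Go #> g"
    and h: "h \<in> carrier G" "Go #> y = Go #> h"
    and gh: "g \<otimes> inv h \<in> Go \<or> (g \<otimes> inv h \<notin> Go \<and> qo g h)"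
    unfolding valued_le_def by blast
  obtain a where a: "a \<in> Go" "g = a \<otimes> x"
    using rcos_eq_otype_mult[OF x g(1)] g(2) by metis
  obtain b where b: "b \<in> Go" "h = b \<otimes> y"
    using rcos_eq_otype_mult[OF y h(1)] h(2) by metis
  have same_class: "g \<otimes> inv h \<in> Go \<longleftrightarrow> x \<otimes> inv y \<in> Go"
    using g h x y rcos_eq_iff_mult_inv[OF otype_subgroup] by metis
  show "x \<otimes> inv y \<in> Go \<or> (x \<otimes> inv y \<notin> Go \<and> qo x y)"
  proof (cases "x \<otimes> inv y \<in> Go")
    case False
    with gh same_class have "qo g h"
      by blast
    have g_in: "g \<in> Go \<longleftrightarrow> x \<in> Go"
      using mult_otype_in_otype_iff[OF a(1) x] a(2) m_comm[OF otype_closed[OF a(1)] x] by simp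
    have h_in: "h \<in> Go \<longleftrightarrow> y \<in> Go"
      using mult_otype_in_otype_iff[OF b(1) y] b(2) m_comm[OF otype_closed[OF b(1)] y] by simp
    have "\<not> (x \<in> Go \<and> y \<in> Go)"
      using False otype_subgroup y by (metis subgroup.m_closed subgroup.m_inv_closed)
    then consider "x \<in> Go" "y \<notin> Go" | "x \<notin> Go" "y \<in> Go" | "x \<notin> Go" "y \<notin> Go"
      by blast
    then have "qo x y"
    proof cases
      case 1
      then show ?thesis
        using not_otype_not_le_otype[OF 1(1) y 1(2)] qo_total[OF x y] by blast
    next
      case 2
      then show ?thesis
        using not_otype_not_le_otype[of h g] \<open>qo g h\<close> g(1) g_in h_in by blast
    next
      case 3
      then have "qequiv qo g x" "qequiv qo h y"
        using otype_mult_qequiv a b x y by simp_all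
      then show ?thesis
        using qo_qequiv_cong[OF g(1) x h(1) y] \<open>qo g h\<close> by blast
    qed
    with False show ?thesis by blast
  qed blast
qed (use x y in \<open>unfold valued_le_def, blast\<close>)

end

locale otype_complement = compatible_qo_group +
  fixes F :: "'a set"
  assumes direct_summand: "direct_summand_compl G (otype_part G qo) F"
begin

lemma complement_subgroup: "subgroup F G"
  using direct_summand unfolding direct_summand_compl_def by blast

lemma otype_inter_complement: "Go \<inter> F = {\<one>}"
  using direct_summand unfolding direct_summand_compl_def by blast

lemma otype_set_mult_complement: "Go <#> F = carrier G"
  using direct_summand unfolding direct_summand_compl_def by blast

lemma complement_closed: "f \<in> F \<Longrightarrow> f \<in> carrier G"
  by (rule subgroup.mem_carrier[OF complement_subgroup])

lemma complement_not_otype: "\<lbrakk>f \<in> F; f \<noteq> \<one>\<rbrakk> \<Longrightarrow> f \<notin> Go"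
  using otype_inter_complement by blast

lemma complement_eq_if_mult_inv_otype:
  assumes "f \<in> F" "g \<in> F" "f \<otimes> inv g \<in> Go"
  shows "f = g"
proof -
  have "f \<otimes> inv g \<in> F"
    using assms complement_subgroup by (simp add: subgroup.m_closed subgroup.m_inv_closed)
  then have "f \<otimes> inv g = \<one>"
    using assms otype_inter_complement by blast
  then show "f = g"
    using inv_solve_right'[OF one_closed complement_closed complement_closed] assms
      complement_closed by simp
qed

lemma valued_le_complement_iff:
  assumes "f \<in> F" "g \<in> F"
  shows "valued_le G qo (Go #> f) (Go #> g) \<longleftrightarrow> qo f g"
proof -
  have "f \<otimes> inv g \<in> Go \<longleftrightarrow> f = g"
    using assms complement_eq_if_mult_inv_otype complement_closed otype_subgroup
    by (auto simp: subgroup.one_closed)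
  then show ?thesis
    using valued_le_rcos_iff assms complement_closed qo_refl by auto
qed

lemma valued_part_iso: "qo_iso (G\<lparr>carrier := F\<rparr>) qo (G Mod Go) (valued_le G qo) (\<lambda>f. Go #> f)"
proof -
  have normal: "Go \<lhd> G"
    using otype_subgroup by (rule subgroup_imp_normal)
  have hom: "(#>) Go \<in> hom (G\<lparr>carrier := F\<rparr>) (G Mod Go)"
    using hom_from_subgroup_generated[OF normal.r_coset_hom_Mod[OF normal], of F]
    unfolding subgroup_generated_subgroup_eq[OF complement_subgroup] .
  have onto: "carrier (G Mod Go) \<subseteq> (#>) Go ` F"
  proof
    fix C assume "C \<in> carrier (G Mod Go)"
    then obtain x where x: "x \<in> carrier G" "C = Go #> x"
      unfolding carrier_FactGroup by blast
    then obtain a f where af: "a \<in> Go" "f \<in> F" "x = a \<otimes> f"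
      using otype_set_mult_complement unfolding set_mult_def by blast
    then have "x \<in> Go #> f"
      using rcosI[OF af(1) subgroup.subset[OF otype_subgroup] complement_closed[OF af(2)]] by simp
    then have "Go #> f = Go #> x"
      by (rule repr_independence[OF _ complement_closed[OF af(2)] otype_subgroup])
    with x af show "C \<in> (#>) Go ` F" by blast
  qed
  have trivial_kernel: "f = \<one>" if "f \<in> F" "Go #> f = Go" for f
    using that rcos_self[OF complement_closed otype_subgroup] complement_not_otype by blast
  interpret group_hom "G\<lparr>carrier := F\<rparr>" "G Mod Go" "(#>) Go"
    using hom subgroup.subgroup_is_group[OF complement_subgroup is_group]
      normal.factorgroup_is_group[OF normal]
    by (simp add: group_hom_def group_hom_axioms_def)
  show ?thesis
    unfolding qo_iso_def
    using iso_iff onto trivial_kernel valued_le_complement_iff by simp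
qed

lemma compat_prod_le_iff:
  assumes a: "a \<in> Go" "a' \<in> Go" and f: "f \<in> F" "f' \<in> F"
  shows "qo (a \<otimes> f) (a' \<otimes> f') \<longleftrightarrow> compat_prod_le (G\<lparr>carrier := F\<rparr>) qo qo (a, f) (a', f')"
proof -
  have ac: "a \<in> carrier G" "a' \<in> carrier G" and fc: "f \<in> carrier G" "f' \<in> carrier G"
    using a f otype_closed complement_closed by auto
  have shifted: "a \<otimes> f \<notin> Go" "qequiv qo (a \<otimes> f) f"
    if "a \<in> Go" "f \<in> F" "f \<noteq> \<one>" for a f
  proof -
    have "f \<in> carrier G" "f \<notin> Go"
      using that complement_closed complement_not_otype by auto
    then show "a \<otimes> f \<notin> Go" "qequiv qo (a \<otimes> f) f"
      using mult_otype_in_otype_iff[OF \<open>a \<in> Go\<close>] m_comm[OF otype_closed[OF \<open>a \<in> Go\<close>]]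
        otype_mult_qequiv[OF \<open>a \<in> Go\<close>] by auto
  qed
  show ?thesis
  proof (cases "f = \<one>"; cases "f' = \<one>")
    assume "f = \<one>" "f' = \<one>"
    then show ?thesis
      using ac unfolding compat_prod_le_def by simp
  next
    assume "f \<noteq> \<one>" "f' = \<one>"
    then show ?thesis
      using not_otype_not_le_otype[OF a(2) m_closed[OF ac(1) fc(1)] shifted(1)[OF a(1) f(1)]] ac
      unfolding compat_prod_le_def by simp
  next
    assume "f = \<one>" "f' \<noteq> \<one>"
    have "qo a (a' \<otimes> f')"
      using not_otype_not_le_otype[OF a(1) m_closed[OF ac(2) fc(2)] shifted(1)[OF a(2) f(2)]]
        qo_total[OF ac(1) m_closed[OF ac(2) fc(2)]] \<open>f' \<noteq> \<one>\<close> by blast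
    moreover have "qo \<one> f'"
      using not_otype_not_le_one[OF fc(2) complement_not_otype[OF f(2)]] qo_total[OF one_closed fc(2)]
        \<open>f' \<noteq> \<one>\<close> by blast
    ultimately show ?thesis
      using \<open>f = \<one>\<close> \<open>f' \<noteq> \<one>\<close> ac unfolding compat_prod_le_def by simp
  next
    assume "f \<noteq> \<one>" "f' \<noteq> \<one>"
    then have "qo (a \<otimes> f) (a' \<otimes> f') \<longleftrightarrow> qo f f'"
      using qo_qequiv_cong shifted(2) a f ac fc by simp
    with \<open>f' \<noteq> \<one>\<close> show ?thesis
      unfolding compat_prod_le_def by simp
  qed
qed

lemma compat_product_iso:
  "qo_iso ((G\<lparr>carrier := Go\<rparr>) \<times>\<times> (G\<lparr>carrier := F\<rparr>)) (compat_prod_le (G\<lparr>carrier := F\<rparr>) qo qo)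
     G qo (\<lambda>(a, f). a \<otimes> f)"
proof -
  interpret group_disjoint_sum G Go F
    using otype_subgroup complement_subgroup
    by (simp add: group_disjoint_sum_def is_group)
  have "(\<lambda>(a, f). a \<otimes> f) \<in> iso (G\<lparr>carrier := Go\<rparr> \<times>\<times> G\<lparr>carrier := F\<rparr>) G"
    using iso_group_mul[OF comm_group_axioms] otype_inter_complement otype_set_mult_complement
    by (simp add: subgroup_generated_subgroup_eq otype_subgroup complement_subgroup)
  then show ?thesis
    unfolding qo_iso_def using compat_prod_le_iff by auto
qed

end

theorem mainTheorem12:
  fixes G :: "('a, 'b) monoid_scheme" and qo :: "'a \<Rightarrow> 'a \<Rightarrow> bool" and F :: "'a set"
  assumes "cqo_group G qo"
    and "direct_summand_compl G (otype_part G qo) F"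
  shows "qo_iso (G\<lparr>carrier := F\<rparr>) qo (G Mod (otype_part G qo)) (valued_le G qo)
           (\<lambda>f. otype_part G qo #>\<^bsub>G\<^esub> f)
         \<and> qo_iso ((G\<lparr>carrier := otype_part G qo\<rparr>) \<times>\<times> (G\<lparr>carrier := F\<rparr>))
           (compat_prod_le (G\<lparr>carrier := F\<rparr>) qo qo) G qo
           (\<lambda>(a, f). a \<otimes>\<^bsub>G\<^esub> f)"
proof -
  have "subgroup (otype_part G qo) G"
    using assms(2) unfolding direct_summand_compl_def by blast
  with assms interpret otype_complement G qo F
    by (simp add: otype_complement_def otype_complement_axioms_def compatible_qo_group_def)
  show ?thesis
    using valued_part_iso compat_product_iso by blast
qed

end
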